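(* For any compilation chain whose traces are finite or infinite sequences of events and any trace relation ${\sim}\subseteq\mathit{Trace}_S\times\mathit{Trace}_T$ with existential and universal images $\tilde\tau,\tilde\sigma$, the following are equivalent: (i) $\mathit{SC}^{\sim}$: for every source program $W$ and every finite target trace prefix $m$, if $W{\downarrow}\rightsquigarrow m$ then there exist a target trace $t$ and a source trace $s$ with $m\le t$, $s\sim t$ and $W\rightsquigarrow s$; (ii) $\mathit{SP}^{\tilde\sigma}$: for every $W$ and every target safety property $\pi_T$, $W\models\tilde\sigma(\pi_T)$ implies $W{\downarrow}\models\pi_T$; (iii) $\mathit{SP}^{\tilde\tau}$: for every $W$ and every $\pi_S\subseteq\mathit{Trace}_S$, $W\models\pi_S$ implies $W{\downarrow}\models(\mathit{Safe}\circ\tilde\tau)(\pi_S)$.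
   Context: A compilation chain consists of source (whole) programs $W$, target programs, sets $\mathit{Trace}_S,\mathit{Trace}_T$ of traces, semantics relations $W\rightsquigarrow t$ (W can produce $t$) at both levels, and a compiler $W\mapsto W{\downarrow}$. $W\models\pi$ iff every trace produced by $W$ is in $\pi$. $m\le t$ means $m$ is a finite prefix of $t$; $W\rightsquigarrow m$ for a finite prefix $m$ means there is $t$ with $m\le t$ and $W\rightsquigarrow t$. A target property $\pi$ is a safety property iff for every $t\notin\pi$ there is $m\le t$ such that every $t'$ with $m\le t'$ satisfies $t'\notin\pi$. $\mathit{Safe}(\pi)$ is the intersection of all target safety properties containing $\pi$. The existential image of $\sim$ is $\tilde\tau(\pi)=\{t\mid\exists s.\ s\sim t\wedge s\in\pi\}$ and its universal image is $\tilde\sigma(\pi)=\{s\mid\forall t.\ s\sim t\Rightarrow t\in\pi\}$. *)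

theory Defs
  imports Main
begin

datatype 'e trace = FinT "'e list" | InfT "nat \<Rightarrow> 'e"

fun prefix_of :: "'e list \<Rightarrow> 'e trace \<Rightarrow> bool" where
  "prefix_of m (FinT l) = (\<exists>r. l = m @ r)"
| "prefix_of m (InfT f) = (m = map f [0..<length m])"

definition produces_prefix :: "('w \<Rightarrow> 'e trace \<Rightarrow> bool) \<Rightarrow> 'w \<Rightarrow> 'e list \<Rightarrow> bool" where
  "produces_prefix sem W m \<longleftrightarrow> (\<exists>t. prefix_of m t \<and> sem W t)"

definition sat :: "('w \<Rightarrow> 't \<Rightarrow> bool) \<Rightarrow> 'w \<Rightarrow> 't set \<Rightarrow> bool" where
  "sat sem W \<pi> \<longleftrightarrow> (\<forall>t. sem W t \<longrightarrow> t \<in> \<pi>)"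

definition safety :: "'e trace set \<Rightarrow> bool" where
  "safety \<pi> \<longleftrightarrow> (\<forall>t. t \<notin> \<pi> \<longrightarrow> (\<exists>m. prefix_of m t \<and> (\<forall>t'. prefix_of m t' \<longrightarrow> t' \<notin> \<pi>)))"

definition Safe :: "'e trace set \<Rightarrow> 'e trace set" where
  "Safe \<pi> = \<Inter> {\<pi>'. safety \<pi>' \<and> \<pi> \<subseteq> \<pi>'}"

definition tau_img :: "('s \<Rightarrow> 't \<Rightarrow> bool) \<Rightarrow> 's set \<Rightarrow> 't set" where
  "tau_img rel \<pi> = {t. \<exists>s. rel s t \<and> s \<in> \<pi>}"

definition sigma_img :: "('s \<Rightarrow> 't \<Rightarrow> bool) \<Rightarrow> 't set \<Rightarrow> 's set" where
  "sigma_img rel \<pi> = {s. \<forall>t. rel s t \<longrightarrow> t \<in> \<pi>}"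

end

theory Submission
  imports Defs
begin

text \<open>
  The existential and universal images form a Galois connection,
  \<open>\<tau>(\<pi>\<^sub>S) \<subseteq> \<pi>\<^sub>T \<longleftrightarrow> \<pi>\<^sub>S \<subseteq> \<sigma>(\<pi>\<^sub>T)\<close>, and \<open>Safe\<close> is the closure onto safety properties;
  together they make the two preservation statements interderivable.
  The criterion on prefixes is the pointwise form of \<open>\<sigma>\<close>-preservation: a target
  prefix \<open>m\<close> that no related source behaviour can extend is refuted by the
  safety property "\<open>m\<close> is not a prefix", whose \<open>\<sigma>\<close>-image the source program satisfies.
\<close>

definition safety_criterion ::
    "('wS \<Rightarrow> 's \<Rightarrow> bool) \<Rightarrow> ('wT \<Rightarrow> 'eT trace \<Rightarrow> bool) \<Rightarrow> ('wS \<Rightarrow> 'wT)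
      \<Rightarrow> ('s \<Rightarrow> 'eT trace \<Rightarrow> bool) \<Rightarrow> bool" where
  "safety_criterion semS semT compile rel \<longleftrightarrow>
     (\<forall>W m. produces_prefix semT (compile W) m \<longrightarrow> (\<exists>t s. prefix_of m t \<and> rel s t \<and> semS W s))"

definition preserves_sigma_safety ::
    "('wS \<Rightarrow> 's \<Rightarrow> bool) \<Rightarrow> ('wT \<Rightarrow> 'eT trace \<Rightarrow> bool) \<Rightarrow> ('wS \<Rightarrow> 'wT)
      \<Rightarrow> ('s \<Rightarrow> 'eT trace \<Rightarrow> bool) \<Rightarrow> bool" where
  "preserves_sigma_safety semS semT compile rel \<longleftrightarrow>
     (\<forall>W \<pi>T. safety \<pi>T \<longrightarrow> sat semS W (sigma_img rel \<pi>T) \<longrightarrow> sat semT (compile W) \<pi>T)"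

definition preserves_tau_safety ::
    "('wS \<Rightarrow> 's \<Rightarrow> bool) \<Rightarrow> ('wT \<Rightarrow> 'eT trace \<Rightarrow> bool) \<Rightarrow> ('wS \<Rightarrow> 'wT)
      \<Rightarrow> ('s \<Rightarrow> 'eT trace \<Rightarrow> bool) \<Rightarrow> bool" where
  "preserves_tau_safety semS semT compile rel \<longleftrightarrow>
     (\<forall>W \<pi>S. sat semS W \<pi>S \<longrightarrow> sat semT (compile W) (Safe (tau_img rel \<pi>S)))"

lemma sat_iff_subset: "sat sem W \<pi> \<longleftrightarrow> {t. sem W t} \<subseteq> \<pi>"
  unfolding sat_def by blast

lemma tau_img_subset_iff: "tau_img rel \<pi>S \<subseteq> \<pi>T \<longleftrightarrow> \<pi>S \<subseteq> sigma_img rel \<pi>T"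
  unfolding tau_img_def sigma_img_def by blast

lemma tau_img_sigma_img_subset: "tau_img rel (sigma_img rel \<pi>) \<subseteq> \<pi>"
  by (simp add: tau_img_subset_iff)

lemma safety_not_prefix: "safety {t. \<not> prefix_of m t}"
  unfolding safety_def by auto

lemma Safe_least: "safety \<pi>' \<Longrightarrow> \<pi> \<subseteq> \<pi>' \<Longrightarrow> Safe \<pi> \<subseteq> \<pi>'"
  unfolding Safe_def by blast

lemma sat_Safe_iff: "sat sem W (Safe \<pi>) \<longleftrightarrow> (\<forall>\<pi>'. safety \<pi>' \<and> \<pi> \<subseteq> \<pi>' \<longrightarrow> sat sem W \<pi>')"
  unfolding sat_def Safe_def by blast

lemma safety_criterion_imp_preserves_sigma_safety:
  assumes "safety_criterion semS semT compile rel"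
  shows "preserves_sigma_safety semS semT compile rel"
  unfolding preserves_sigma_safety_def
proof (intro allI impI)
  fix W \<pi>T
  assume "safety \<pi>T" and source: "sat semS W (sigma_img rel \<pi>T)"
  show "sat semT (compile W) \<pi>T"
    unfolding sat_def
  proof (intro allI impI)
    fix t
    assume "semT (compile W) t"
    show "t \<in> \<pi>T"
    proof (rule ccontr)
      assume "t \<notin> \<pi>T"
      with \<open>safety \<pi>T\<close> obtain m
        where "prefix_of m t" and bad: "\<forall>t'. prefix_of m t' \<longrightarrow> t' \<notin> \<pi>T"
        unfolding safety_def by blast
      with \<open>semT (compile W) t\<close> have "produces_prefix semT (compile W) m"
        unfolding produces_prefix_def by blast
      with assms obtain t' s where "prefix_of m t'" "rel s t'" "semS W s"
        unfolding safety_criterion_def by blast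
      with source bad show False
        unfolding sat_def sigma_img_def by blast
    qed
  qed
qed

lemma preserves_sigma_safety_imp_safety_criterion:
  assumes "preserves_sigma_safety semS semT compile rel"
  shows "safety_criterion semS semT compile rel"
  unfolding safety_criterion_def
proof (intro allI impI)
  fix W m
  assume "produces_prefix semT (compile W) m"
  show "\<exists>t s. prefix_of m t \<and> rel s t \<and> semS W s"
  proof (rule ccontr)
    assume "\<not> ?thesis"
    then have "sat semS W (sigma_img rel {t. \<not> prefix_of m t})"
      unfolding sat_def sigma_img_def by blast
    with assms safety_not_prefix have "sat semT (compile W) {t. \<not> prefix_of m t}"
      unfolding preserves_sigma_safety_def by blast
    with \<open>produces_prefix semT (compile W) m\<close> show False
      unfolding sat_def produces_prefix_def by blast
  qed
qed

lemma preserves_sigma_safety_iff_tau: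
  "preserves_sigma_safety semS semT compile rel \<longleftrightarrow> preserves_tau_safety semS semT compile rel"
proof
  assume sigma: "preserves_sigma_safety semS semT compile rel"
  show "preserves_tau_safety semS semT compile rel"
    unfolding preserves_tau_safety_def sat_Safe_iff
  proof (intro allI impI)
    fix W \<pi>S \<pi>'
    assume "sat semS W \<pi>S" and "safety \<pi>' \<and> tau_img rel \<pi>S \<subseteq> \<pi>'"
    then have "safety \<pi>'" and "sat semS W (sigma_img rel \<pi>')"
      by (auto simp: sat_iff_subset tau_img_subset_iff)
    with sigma show "sat semT (compile W) \<pi>'"
      unfolding preserves_sigma_safety_def by blast
  qed
next
  assume tau: "preserves_tau_safety semS semT compile rel"
  show "preserves_sigma_safety semS semT compile rel"
    unfolding preserves_sigma_safety_def
  proof (intro allI impI)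
    fix W \<pi>T
    assume "safety \<pi>T" and "sat semS W (sigma_img rel \<pi>T)"
    with tau have "sat semT (compile W) (Safe (tau_img rel (sigma_img rel \<pi>T)))"
      unfolding preserves_tau_safety_def by blast
    moreover have "Safe (tau_img rel (sigma_img rel \<pi>T)) \<subseteq> \<pi>T"
      using \<open>safety \<pi>T\<close> tau_img_sigma_img_subset by (rule Safe_least)
    ultimately show "sat semT (compile W) \<pi>T"
      unfolding sat_iff_subset by blast
  qed
qed

lemma safety_criterion_iff_preserves_sigma_safety:
  "safety_criterion semS semT compile rel \<longleftrightarrow> preserves_sigma_safety semS semT compile rel"
  by (rule iffI[OF safety_criterion_imp_preserves_sigma_safety
        preserves_sigma_safety_imp_safety_criterion])

theorem theoremB1:
  fixes semS :: "'wS \<Rightarrow> 'eS trace \<Rightarrow> bool"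
    and semT :: "'wT \<Rightarrow> 'eT trace \<Rightarrow> bool"
    and comp :: "'wS \<Rightarrow> 'wT"
    and rel :: "'eS trace \<Rightarrow> 'eT trace \<Rightarrow> bool"
  shows
   "((\<forall>W m. produces_prefix semT (comp W) m \<longrightarrow>
        (\<exists>t s. prefix_of m t \<and> rel s t \<and> semS W s))
     \<longleftrightarrow>
     (\<forall>W \<pi>T. safety \<pi>T \<longrightarrow> sat semS W (sigma_img rel \<pi>T) \<longrightarrow> sat semT (comp W) \<pi>T))
   \<and>
   ((\<forall>W \<pi>T. safety \<pi>T \<longrightarrow> sat semS W (sigma_img rel \<pi>T) \<longrightarrow> sat semT (comp W) \<pi>T)
     \<longleftrightarrow>
     (\<forall>W \<pi>S. sat semS W \<pi>S \<longrightarrow> sat semT (comp W) (Safe (tau_img rel \<pi>S))))"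
  using safety_criterion_iff_preserves_sigma_safety preserves_sigma_safety_iff_tau
  unfolding safety_criterion_def preserves_sigma_safety_def preserves_tau_safety_def
  by (rule conjI)

end
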